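(* Let $P$ be a finite poset, let $L=\mathcal{F}(P)$, and let $K=[\hat0_K,\hat1_K]$ be an interval of $L$ (so $\hat1_K\subseteq\hat0_K$ as filters of $P$). Put $S=\hat0_K\setminus\hat1_K$, let $S_0$ be the set of maximal elements of $P\setminus\hat0_K$, and let $S_1$ be the set of minimal elements of $\hat1_K$. Then the following are equivalent: (1) $L={\uparrow\hat0_K}\cup{\downarrow\hat1_K}$, where ${\uparrow\hat0_K}=\{a\in L: a\ge \hat0_K\}$ and ${\downarrow\hat1_K}=\{a\in L: a\le\hat1_K\}$; (2) $K$ is a cutting of $L$; (3) $z<y$ in $P$ for all $z\in S_0$ and all $y\in S_1$; (4) for a new element $x_K\notin P$ there exists a partial order on $P\cup\{x_K\}$ which restricts to the order of $P$ on $P$, in which $x_K$ covers every element of $S_0$ and is covered by every element of $S_1$, and such that the set of elements of $P\cup\{x_K\}$ that are incomparable to $x_K$ is exactly $S$.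
   Context: For a finite poset $P$, a filter is an up-closed subset of $P$. $\mathcal{F}(P)$ denotes the set of all filters of $P$ ordered by reverse inclusion ($F\le G$ iff $F\supseteq G$); it is a finite distributive lattice with least element $P$ and greatest element $\emptyset$. A cutting of a finite distributive lattice $L$ is an interval (convex sublattice) $K$ of $L$ such that every maximal chain of $L$ contains at least one element of $K$. *)

theory Defs
  imports Main
begin

text \<open>A finite poset is modelled as a finite subset P of a type with a partial order,
  carrying the induced order.\<close>

definition filters :: "'a::order set \<Rightarrow> 'a set set" where
  "filters P = {F. F \<subseteq> P \<and> (\<forall>x\<in>F. \<forall>y\<in>P. x \<le> y \<longrightarrow> y \<in> F)}"

text \<open>The lattice F(P) is ordered by reverse inclusion: F \<le> G iff G \<subseteq> F.
  The interval [a,b] (a \<le> b in F(P), i.e. b \<subseteq> a) is therefore:\<close>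
definition filt_interval :: "'a::order set \<Rightarrow> 'a set \<Rightarrow> 'a set \<Rightarrow> 'a set set" where
  "filt_interval P a b = {F \<in> filters P. b \<subseteq> F \<and> F \<subseteq> a}"

definition filt_up :: "'a::order set \<Rightarrow> 'a set \<Rightarrow> 'a set set" where
  "filt_up P a = {F \<in> filters P. F \<subseteq> a}"

definition filt_down :: "'a::order set \<Rightarrow> 'a set \<Rightarrow> 'a set set" where
  "filt_down P b = {F \<in> filters P. b \<subseteq> F}"

text \<open>Maximal chains of F(P); chains for reverse inclusion coincide with chains for inclusion.\<close>
definition max_chains_filt :: "'a::order set \<Rightarrow> 'a set set set" where
  "max_chains_filt P = {C. subset.maxchain (filters P) C}"

definition is_cutting :: "'a::order set \<Rightarrow> 'a set set \<Rightarrow> bool" where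
  "is_cutting P K \<longleftrightarrow> (\<exists>a b. a \<in> filters P \<and> b \<in> filters P \<and> b \<subseteq> a \<and> K = filt_interval P a b)
     \<and> (\<forall>C \<in> max_chains_filt P. C \<inter> K \<noteq> {})"

definition maximals :: "'a::order set \<Rightarrow> 'a set" where
  "maximals X = {z \<in> X. \<not> (\<exists>w\<in>X. z < w)}"

definition minimals :: "'a::order set \<Rightarrow> 'a set" where
  "minimals X = {z \<in> X. \<not> (\<exists>w\<in>X. w < z)}"

definition partial_order_on_rel :: "'b set \<Rightarrow> ('b \<Rightarrow> 'b \<Rightarrow> bool) \<Rightarrow> bool" where
  "partial_order_on_rel X R \<longleftrightarrow>
     (\<forall>x\<in>X. R x x) \<and>
     (\<forall>x\<in>X. \<forall>y\<in>X. R x y \<and> R y x \<longrightarrow> x = y) \<and>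
     (\<forall>x\<in>X. \<forall>y\<in>X. \<forall>z\<in>X. R x y \<and> R y z \<longrightarrow> R x z)"

definition covers_rel :: "'b set \<Rightarrow> ('b \<Rightarrow> 'b \<Rightarrow> bool) \<Rightarrow> 'b \<Rightarrow> 'b \<Rightarrow> bool" where
  "covers_rel X R y x \<longleftrightarrow> x \<in> X \<and> y \<in> X \<and> R x y \<and> x \<noteq> y \<and>
     \<not> (\<exists>w\<in>X. R x w \<and> R w y \<and> w \<noteq> x \<and> w \<noteq> y)"

end

theory Submission
  imports Defs
begin

text \<open>
  The pivot is the condition that every element of \<open>P - a\<close> lies strictly below
  every element of \<open>b\<close>; for finite \<open>P\<close> it is equivalent to (3), since it suffices to check it
  on maximal elements of \<open>P - a\<close> and minimal elements of \<open>b\<close>.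
  Under this condition a filter that neither contains \<open>b\<close> nor lies inside \<open>a\<close> would contain
  some \<open>x \<notin> a\<close> and miss some \<open>y \<in> b\<close> although \<open>x < y\<close>, which gives (1).
  Given (1), a maximal chain \<open>C\<close> meets \<open>K\<close> in the filter \<open>a \<inter> \<Inter>{X \<in> C. b \<subseteq> X}\<close>, which is
  comparable with every member of \<open>C\<close>. If the condition fails for \<open>z \<notin> a\<close> and \<open>y \<in> b\<close>, a maximal
  chain through the principal filter of \<open>z\<close> misses \<open>K\<close>: no filter of \<open>K\<close> contains \<open>z\<close>, and
  each contains \<open>y\<close>. Finally, the condition makes \<open>x \<le> x\<^sub>K \<longleftrightarrow> x \<notin> a\<close> and
  \<open>x\<^sub>K \<le> y \<longleftrightarrow> y \<in> b\<close> a partial order with the properties in (4), and conversely in any such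
  order \<open>z < x\<^sub>K < y\<close> for \<open>z \<in> S\<^sub>0\<close>, \<open>y \<in> S\<^sub>1\<close>.
\<close>

lemma subset_maxchain_mem_if_comparable:
  assumes C: "subset.maxchain A C" and "X \<in> A" and "\<forall>Y\<in>C. Y \<subseteq> X \<or> X \<subseteq> Y"
  shows "X \<in> C"
proof (rule ccontr)
  assume "X \<notin> C"
  have "subset.chain A C"
    using C by (simp add: subset.maxchain_def)
  with assms have "subset.chain A (insert X C)"
    by (simp add: subset_chain_insert)
  moreover have "C \<subset> insert X C"
    using \<open>X \<notin> C\<close> by blast
  ultimately show False
    using C unfolding subset.maxchain_def by blast
qed

lemma subset_maxchain_through:
  assumes "X \<in> A"
  shows "\<exists>C. subset.maxchain A C \<and> X \<in> C"
proof -
  define B where "B = {Y \<in> A. Y \<subseteq> X \<or> X \<subseteq> Y}"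
  obtain C where C: "subset.maxchain B C"
    using subset.Hausdorff by blast
  then have "C \<subseteq> B"
    by (simp add: subset.maxchain_def subset_chain_def)
  have "X \<in> C"
    using subset_maxchain_mem_if_comparable[OF C] assms \<open>C \<subseteq> B\<close> by (auto simp: B_def)
  have "subset.maxchain A C"
    unfolding subset.maxchain_def
  proof (intro conjI notI)
    show "subset.chain A C"
      using C \<open>C \<subseteq> B\<close> by (auto simp: subset.maxchain_def subset_chain_def B_def)
  next
    assume "\<exists>D. subset.chain A D \<and> C \<subset> D"
    then obtain D where D: "subset.chain A D" "C \<subset> D"
      by blast
    with \<open>X \<in> C\<close> have "subset.chain B D"
      unfolding subset_chain_def B_def by blast
    with C D(2) show False
      by (auto simp: subset.maxchain_def)
  qed
  with \<open>X \<in> C\<close> show ?thesis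
    by blast
qed

lemma finite_ex_maximals_ge:
  fixes X :: "'a::order set"
  assumes "finite X" and "x \<in> X"
  shows "\<exists>z\<in>maximals X. x \<le> z"
proof -
  obtain m where "m \<in> X" "x \<le> m" "\<forall>y\<in>X. m \<le> y \<longrightarrow> m = y"
    using finite_has_maximal2[OF assms] by blast
  then show ?thesis
    unfolding maximals_def by (auto simp: less_le)
qed

lemma finite_ex_minimals_le:
  fixes X :: "'a::order set"
  assumes "finite X" and "x \<in> X"
  shows "\<exists>z\<in>minimals X. z \<le> x"
proof -
  obtain m where "m \<in> X" "m \<le> x" "\<forall>y\<in>X. y \<le> m \<longrightarrow> m = y"
    using finite_has_minimal2[OF assms] by blast
  then show ?thesis
    unfolding minimals_def by (auto simp: less_le)
qed

lemma maximals_less_minimals_iff: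
  fixes X Y :: "'a::order set"
  assumes "finite X" and "finite Y"
  shows "(\<forall>z\<in>maximals X. \<forall>y\<in>minimals Y. z < y) \<longleftrightarrow> (\<forall>x\<in>X. \<forall>y\<in>Y. x < y)"
proof
  assume extremal: "\<forall>z\<in>maximals X. \<forall>y\<in>minimals Y. z < y"
  show "\<forall>x\<in>X. \<forall>y\<in>Y. x < y"
  proof (intro ballI)
    fix x y
    assume "x \<in> X" "y \<in> Y"
    obtain z where z: "z \<in> maximals X" "x \<le> z"
      using finite_ex_maximals_ge[OF \<open>finite X\<close> \<open>x \<in> X\<close>] by blast
    obtain y' where y': "y' \<in> minimals Y" "y' \<le> y"
      using finite_ex_minimals_le[OF \<open>finite Y\<close> \<open>y \<in> Y\<close>] by blast
    have "z < y'"
      using extremal z(1) y'(1) by blast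
    with z(2) y'(2) show "x < y"
      by (blast intro: le_less_trans less_le_trans)
  qed
next
  assume "\<forall>x\<in>X. \<forall>y\<in>Y. x < y"
  then show "\<forall>z\<in>maximals X. \<forall>y\<in>minimals Y. z < y"
    unfolding maximals_def minimals_def by blast
qed

lemma filters_subset: "F \<in> filters P \<Longrightarrow> F \<subseteq> P"
  unfolding filters_def by blast

lemma filters_upward: "F \<in> filters P \<Longrightarrow> x \<in> F \<Longrightarrow> y \<in> P \<Longrightarrow> x \<le> y \<Longrightarrow> y \<in> F"
  unfolding filters_def by blast

lemma principal_filter_in_filters: "{y \<in> P. x \<le> y} \<in> filters P"
  unfolding filters_def using order_trans by blast

lemma max_chain_meets_filt_interval:
  assumes a: "a \<in> filters P" and "b \<subseteq> a"
    and cover: "filters P = filt_up P a \<union> filt_down P b"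
    and "C \<in> max_chains_filt P"
  shows "C \<inter> filt_interval P a b \<noteq> {}"
proof -
  have C: "subset.maxchain (filters P) C"
    using \<open>C \<in> max_chains_filt P\<close> by (simp add: max_chains_filt_def)
  then have C_filters: "C \<subseteq> filters P"
    and C_total: "\<And>X Y. X \<in> C \<Longrightarrow> Y \<in> C \<Longrightarrow> X \<subseteq> Y \<or> Y \<subseteq> X"
    by (auto simp: subset.maxchain_def subset_chain_def)
  define G where "G = a \<inter> \<Inter>{X \<in> C. b \<subseteq> X}"
  have G_filter: "G \<in> filters P"
    unfolding filters_def
  proof (intro CollectI conjI ballI impI)
    show "G \<subseteq> P"
      using filters_subset[OF a] by (auto simp: G_def)
    fix x y
    assume "x \<in> G" "y \<in> P" "x \<le> y"
    then show "y \<in> G"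
      using filters_upward[OF a] filters_upward[of _ P] C_filters unfolding G_def by blast
  qed
  then have G_interval: "G \<in> filt_interval P a b"
    using \<open>b \<subseteq> a\<close> by (auto simp: G_def filt_interval_def)
  have "G \<subseteq> X \<or> X \<subseteq> G" if "X \<in> C" for X
  proof (cases "b \<subseteq> X")
    case True
    then show ?thesis
      using that by (auto simp: G_def)
  next
    case False
    with cover \<open>X \<in> C\<close> C_filters have "X \<subseteq> a"
      by (auto simp: filt_up_def filt_down_def)
    moreover have "X \<subseteq> Y" if "Y \<in> C" "b \<subseteq> Y" for Y
      using C_total[OF \<open>X \<in> C\<close> \<open>Y \<in> C\<close>] \<open>b \<subseteq> Y\<close> False by blast
    ultimately show ?thesis
      by (auto simp: G_def)
  qed
  then have "G \<in> C"
    using subset_maxchain_mem_if_comparable[OF C G_filter] by blast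
  with G_interval show ?thesis
    by blast
qed

lemma less_if_max_chains_meet_filt_interval:
  assumes meets: "\<forall>C\<in>max_chains_filt P. C \<inter> filt_interval P a b \<noteq> {}"
    and "z \<in> P - a" and "y \<in> b"
  shows "z < y"
proof -
  define U where "U = {x \<in> P. z \<le> x}"
  obtain C where "subset.maxchain (filters P) C" "U \<in> C"
    using subset_maxchain_through principal_filter_in_filters unfolding U_def by blast
  with meets obtain F where "F \<in> C" "F \<in> filt_interval P a b"
    by (auto simp: max_chains_filt_def)
  moreover have "F \<subseteq> U \<or> U \<subseteq> F"
    using \<open>subset.maxchain (filters P) C\<close> \<open>F \<in> C\<close> \<open>U \<in> C\<close>
    by (auto simp: subset.maxchain_def subset_chain_def)
  ultimately show "z < y"
    using \<open>z \<in> P - a\<close> \<open>y \<in> b\<close> by (auto simp: U_def filt_interval_def less_le)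
qed

lemma filters_eq_filt_up_Un_filt_down:
  assumes "b \<subseteq> P" and below: "\<forall>x\<in>P - a. \<forall>y\<in>b. x < y"
  shows "filters P = filt_up P a \<union> filt_down P b"
proof -
  have "F \<subseteq> a \<or> b \<subseteq> F" if F: "F \<in> filters P" for F
  proof (rule ccontr)
    assume "\<not> (F \<subseteq> a \<or> b \<subseteq> F)"
    then obtain x y where "x \<in> F" "x \<notin> a" "y \<in> b" "y \<notin> F"
      by blast
    moreover have "x \<in> P"
      using filters_subset[OF F] \<open>x \<in> F\<close> by blast
    ultimately show False
      using below filters_upward[OF F] \<open>b \<subseteq> P\<close> by (meson Diff_iff less_imp_le subsetD)
  qed
  then show ?thesis
    by (auto simp: filt_up_def filt_down_def)
qed

lemma filters_eq_filt_up_Un_filt_down_iff: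
  assumes "a \<in> filters P" and "b \<in> filters P" and "b \<subseteq> a"
  shows "filters P = filt_up P a \<union> filt_down P b \<longleftrightarrow> (\<forall>x\<in>P - a. \<forall>y\<in>b. x < y)"
proof
  assume "filters P = filt_up P a \<union> filt_down P b"
  then have "\<forall>C\<in>max_chains_filt P. C \<inter> filt_interval P a b \<noteq> {}"
    using max_chain_meets_filt_interval[OF assms(1,3)] by blast
  then show "\<forall>x\<in>P - a. \<forall>y\<in>b. x < y"
    using less_if_max_chains_meet_filt_interval by blast
next
  assume "\<forall>x\<in>P - a. \<forall>y\<in>b. x < y"
  then show "filters P = filt_up P a \<union> filt_down P b"
    using filters_eq_filt_up_Un_filt_down[OF filters_subset[OF assms(2)]] by blast
qed

lemma is_cutting_filt_interval_iff:
  assumes "a \<in> filters P" and "b \<in> filters P" and "b \<subseteq> a"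
  shows "is_cutting P (filt_interval P a b) \<longleftrightarrow> (\<forall>x\<in>P - a. \<forall>y\<in>b. x < y)"
proof
  assume "is_cutting P (filt_interval P a b)"
  then have "\<forall>C\<in>max_chains_filt P. C \<inter> filt_interval P a b \<noteq> {}"
    unfolding is_cutting_def by blast
  then show "\<forall>x\<in>P - a. \<forall>y\<in>b. x < y"
    using less_if_max_chains_meet_filt_interval by blast
next
  assume "\<forall>x\<in>P - a. \<forall>y\<in>b. x < y"
  then have "\<forall>C\<in>max_chains_filt P. C \<inter> filt_interval P a b \<noteq> {}"
    using filters_eq_filt_up_Un_filt_down_iff[OF assms] max_chain_meets_filt_interval[OF assms(1,3)]
    by blast
  then show "is_cutting P (filt_interval P a b)"
    using assms unfolding is_cutting_def by blast
qed

definition cut_point_order :: "'a::order set \<Rightarrow> 'a set \<Rightarrow> 'a set \<Rightarrow> ('a option \<Rightarrow> 'a option \<Rightarrow> bool) \<Rightarrow> bool"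
  where "cut_point_order P a b R \<longleftrightarrow>
    partial_order_on_rel (insert None (Some ` P)) R
    \<and> (\<forall>x\<in>P. \<forall>y\<in>P. R (Some x) (Some y) \<longleftrightarrow> x \<le> y)
    \<and> (\<forall>z\<in>maximals (P - a). covers_rel (insert None (Some ` P)) R None (Some z))
    \<and> (\<forall>y\<in>minimals b. covers_rel (insert None (Some ` P)) R (Some y) None)
    \<and> {w \<in> insert None (Some ` P). \<not> R w None \<and> \<not> R None w} = Some ` (a - b)"

fun cut_point_le :: "'a set \<Rightarrow> 'a set \<Rightarrow> 'a::order option \<Rightarrow> 'a option \<Rightarrow> bool" where
  "cut_point_le a b (Some x) (Some y) \<longleftrightarrow> x \<le> y"
| "cut_point_le a b (Some x) None \<longleftrightarrow> x \<notin> a"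
| "cut_point_le a b None (Some y) \<longleftrightarrow> y \<in> b"
| "cut_point_le a b None None \<longleftrightarrow> True"

lemma partial_order_cut_point_le:
  assumes a: "a \<in> filters P" and b: "b \<in> filters P" and "b \<subseteq> a"
    and below: "\<forall>x\<in>P - a. \<forall>y\<in>b. x < y"
  shows "partial_order_on_rel (insert None (Some ` P)) (cut_point_le a b)"
  unfolding partial_order_on_rel_def
proof (intro conjI ballI impI)
  fix u v
  assume "cut_point_le a b u v \<and> cut_point_le a b v u"
  then show "u = v"
    using \<open>b \<subseteq> a\<close> by (cases u; cases v) auto
next
  fix u v w
  assume "u \<in> insert None (Some ` P)" "v \<in> insert None (Some ` P)" "w \<in> insert None (Some ` P)"
    and "cut_point_le a b u v \<and> cut_point_le a b v w"
  then show "cut_point_le a b u w"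
    using filters_upward[OF a] filters_upward[OF b] below
    by (cases u; cases v; cases w) (auto intro: order_trans less_imp_le)
qed (auto elim: cut_point_le.elims)

lemma cut_point_order_cut_point_le:
  assumes a: "a \<in> filters P" and b: "b \<in> filters P" and "b \<subseteq> a"
    and below: "\<forall>x\<in>P - a. \<forall>y\<in>b. x < y"
  shows "cut_point_order P a b (cut_point_le a b)"
  unfolding cut_point_order_def
proof (intro conjI ballI)
  show "partial_order_on_rel (insert None (Some ` P)) (cut_point_le a b)"
    using partial_order_cut_point_le[OF assms] .
next
  fix z
  assume "z \<in> maximals (P - a)"
  then show "covers_rel (insert None (Some ` P)) (cut_point_le a b) None (Some z)"
    unfolding covers_rel_def maximals_def by (auto simp: less_le)
next
  fix y
  assume "y \<in> minimals b"
  then show "covers_rel (insert None (Some ` P)) (cut_point_le a b) (Some y) None"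
    using filters_subset[OF b] unfolding covers_rel_def minimals_def by (auto simp: less_le)
next
  show "{w \<in> insert None (Some ` P). \<not> cut_point_le a b w None \<and> \<not> cut_point_le a b None w} =
      Some ` (a - b)"
    using filters_subset[OF a] by auto
qed simp

lemma less_if_cut_point_order:
  assumes R: "cut_point_order P a b R" and "b \<subseteq> a"
    and "z \<in> maximals (P - a)" and "y \<in> minimals b"
  shows "z < y"
proof -
  let ?X = "insert None (Some ` P)"
  have trans: "\<forall>u\<in>?X. \<forall>v\<in>?X. \<forall>w\<in>?X. R u v \<and> R v w \<longrightarrow> R u w"
    using R unfolding cut_point_order_def partial_order_on_rel_def by (elim conjE)
  have "R (Some z) None" "R None (Some y)" "z \<in> P" "y \<in> P"
    using R \<open>z \<in> maximals (P - a)\<close> \<open>y \<in> minimals b\<close>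
    unfolding cut_point_order_def covers_rel_def by auto
  with trans have "R (Some z) (Some y)"
    by (meson image_eqI insertI1 insertI2)
  with R \<open>z \<in> P\<close> \<open>y \<in> P\<close> have "z \<le> y"
    unfolding cut_point_order_def by blast
  moreover have "z \<noteq> y"
    using assms(2-4) unfolding maximals_def minimals_def by blast
  ultimately show ?thesis
    by simp
qed

lemma less_iff_ex_cut_point_order:
  assumes "finite P" and "a \<in> filters P" and "b \<in> filters P" and "b \<subseteq> a"
  shows "(\<forall>x\<in>P - a. \<forall>y\<in>b. x < y) \<longleftrightarrow> (\<exists>R. cut_point_order P a b R)"
proof
  assume "\<forall>x\<in>P - a. \<forall>y\<in>b. x < y"
  then show "\<exists>R. cut_point_order P a b R"
    using cut_point_order_cut_point_le[OF assms(2-4)] by blast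
next
  assume "\<exists>R. cut_point_order P a b R"
  then have extremal: "\<forall>z\<in>maximals (P - a). \<forall>y\<in>minimals b. z < y"
    using less_if_cut_point_order[OF _ assms(4)] by blast
  have finite: "finite (P - a)" "finite b"
    using \<open>finite P\<close> filters_subset[OF assms(3)] finite_subset by auto
  show "\<forall>x\<in>P - a. \<forall>y\<in>b. x < y"
    using iffD1[OF maximals_less_minimals_iff[OF finite] extremal] .
qed

theorem theorem2:
  fixes P :: "'a::order set" and a b :: "'a set"
  assumes "finite P"
    and "a \<in> filters P" and "b \<in> filters P" and "b \<subseteq> a"
  defines "S \<equiv> a - b"
    and "S0 \<equiv> maximals (P - a)"
    and "S1 \<equiv> minimals b"
  shows
    "(filters P = filt_up P a \<union> filt_down P b
       \<longleftrightarrow> is_cutting P (filt_interval P a b))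
   \<and> (is_cutting P (filt_interval P a b)
       \<longleftrightarrow> (\<forall>z\<in>S0. \<forall>y\<in>S1. z < y))
   \<and> ((\<forall>z\<in>S0. \<forall>y\<in>S1. z < y)
       \<longleftrightarrow> (\<exists>R :: 'a option \<Rightarrow> 'a option \<Rightarrow> bool.
             partial_order_on_rel (insert None (Some ` P)) R
           \<and> (\<forall>x\<in>P. \<forall>y\<in>P. R (Some x) (Some y) \<longleftrightarrow> x \<le> y)
           \<and> (\<forall>z\<in>S0. covers_rel (insert None (Some ` P)) R None (Some z))
           \<and> (\<forall>y\<in>S1. covers_rel (insert None (Some ` P)) R (Some y) None)
           \<and> {w \<in> insert None (Some ` P). \<not> R w None \<and> \<not> R None w} = Some ` S))"
proof -
  have "finite (P - a)" "finite b"
    using \<open>finite P\<close> filters_subset[OF assms(3)] finite_subset by auto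
  then show ?thesis
    using maximals_less_minimals_iff[of "P - a" b] filters_eq_filt_up_Un_filt_down_iff[OF assms(2-4)]
      is_cutting_filt_interval_iff[OF assms(2-4)] less_iff_ex_cut_point_order[OF assms(1-4)]
    unfolding cut_point_order_def S_def S0_def S1_def by simp
qed

end
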